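(* Let $R$ be a ring such that whenever $a,b\in R$ satisfy $a+b=1$, there exist $r,s,e\in R$ with $1+ar\in eR$, $1+bs\in(1-e)R$ and $eR(1-e)\subseteq J(R)$. Then $R$ is feckly clean.
   Context: Rings are associative with identity, not necessarily commutative; $J(R)$ is the Jacobson radical. An element $u\in R$ is full if $RuR=R$. An element $a\in R$ is feckly clean if there exist $e\in R$ and a full element $u\in R$ with $a=e+u$ and $eR(1-e)\subseteq J(R)$; $R$ is feckly clean if every element is feckly clean. *)

theory Defs
  imports Main
begin

definition left_ideal :: "'a::ring_1 set \<Rightarrow> bool" where
  "left_ideal I \<longleftrightarrow> 0 \<in> I \<and> (\<forall>x\<in>I. \<forall>y\<in>I. x + y \<in> I) \<and> (\<forall>x\<in>I. - x \<in> I)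
      \<and> (\<forall>r x. x \<in> I \<longrightarrow> r * x \<in> I)"

definition maximal_left_ideal :: "'a::ring_1 set \<Rightarrow> bool" where
  "maximal_left_ideal M \<longleftrightarrow> left_ideal M \<and> M \<noteq> UNIV
      \<and> (\<forall>I. left_ideal I \<and> M \<subseteq> I \<and> I \<noteq> UNIV \<longrightarrow> I = M)"

definition jacobson :: "'a::ring_1 set" where
  "jacobson = \<Inter> {M. maximal_left_ideal M}"

text \<open>u is full if RuR = R, i.e. the two-sided ideal generated by u is R,
  i.e. 1 is a finite sum of elements r*u*s.\<close>
definition full :: "'a::ring_1 \<Rightarrow> bool" where
  "full u \<longleftrightarrow> (\<exists>n::nat. \<exists>r s :: nat \<Rightarrow> 'a. (\<Sum>i<n. r i * u * s i) = 1)"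

definition feckly_clean_elem :: "'a::ring_1 \<Rightarrow> bool" where
  "feckly_clean_elem a \<longleftrightarrow> (\<exists>e u. a = e + u \<and> full u
      \<and> (\<forall>r. e * r * (1 - e) \<in> jacobson))"

definition feckly_clean :: "'a::ring_1 itself \<Rightarrow> bool" where
  "feckly_clean _ \<longleftrightarrow> (\<forall>a::'a. feckly_clean_elem a)"

end

theory Submission
  imports Defs
begin

(* Given a, apply the hypothesis to a + (1 - a) = 1 to get r, s, e with
   1 + a r = e x, 1 + (1 - a) s = (1 - e) y and e R (1 - e) \<subseteq> J(R).  Put u = a - e.
   A direct computation gives  -(1 - e) u r + e u s = 1 - z  with z = (e - e e)(x - r - s + y),
   and z lies in J(R) because e - e e = e 1 (1 - e) does and J(R) is a two-sided ideal.
   Since 1 - z is left invertible, some v gives 1 = -(v(1 - e)) u r + (v e) u s, so u is full. *)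

lemma left_idealI:
  assumes "0 \<in> I" "\<And>x y. x \<in> I \<Longrightarrow> y \<in> I \<Longrightarrow> x + y \<in> I" "\<And>x. x \<in> I \<Longrightarrow> - x \<in> I"
    "\<And>r x. x \<in> I \<Longrightarrow> r * x \<in> I"
  shows "left_ideal (I :: 'a::ring_1 set)"
  using assms unfolding left_ideal_def by blast

lemma left_ideal_add: "left_ideal I \<Longrightarrow> x \<in> I \<Longrightarrow> y \<in> I \<Longrightarrow> x + y \<in> I"
  and left_ideal_mult: "left_ideal I \<Longrightarrow> x \<in> I \<Longrightarrow> r * x \<in> I"
  unfolding left_ideal_def by blast+

lemma left_ideal_one_UNIV: "left_ideal (I::'a::ring_1 set) \<Longrightarrow> 1 \<in> I \<Longrightarrow> I = UNIV"
  using left_ideal_mult[of I 1] by auto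

lemma left_ideal_extend:
  fixes z :: "'a::ring_1"
  assumes M: "left_ideal M"
  shows "left_ideal {m + r * z | m r. m \<in> M}" (is "left_ideal ?I")
proof -
  have mem: "m + r * z \<in> ?I" if "m \<in> M" for m r using that by blast
  show ?thesis
  proof (rule left_idealI)
    show "0 \<in> ?I" using mem[of 0 0] M by (simp add: left_ideal_def)
  next
    fix x y assume "x \<in> ?I" "y \<in> ?I"
    then obtain m1 r1 m2 r2 where "x = m1 + r1 * z" "y = m2 + r2 * z" "m1 \<in> M" "m2 \<in> M"
      by blast
    moreover have "(m1 + m2) + (r1 + r2) * z \<in> ?I"
      using M \<open>m1 \<in> M\<close> \<open>m2 \<in> M\<close> by (intro mem left_ideal_add)
    ultimately show "x + y \<in> ?I" by (simp add: algebra_simps)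
  next
    fix x assume "x \<in> ?I"
    then obtain m r where "x = m + r * z" "m \<in> M" by blast
    moreover have "- m + (- r) * z \<in> ?I" using M \<open>m \<in> M\<close> by (intro mem) (simp add: left_ideal_def)
    ultimately show "- x \<in> ?I" by simp
  next
    fix q x assume "x \<in> ?I"
    then obtain m r where "x = m + r * z" "m \<in> M" by blast
    moreover have "q * m + (q * r) * z \<in> ?I" using M \<open>m \<in> M\<close> by (intro mem left_ideal_mult)
    ultimately show "q * x \<in> ?I" by (simp add: algebra_simps)
  qed
qed

lemma left_ideal_chain_Union:
  fixes C :: "'a::ring_1 set set"
  assumes C: "C \<noteq> {}" "\<And>X. X \<in> C \<Longrightarrow> left_ideal X" "\<And>X Y. X \<in> C \<Longrightarrow> Y \<in> C \<Longrightarrow> X \<subseteq> Y \<or> Y \<subseteq> X"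
  shows "left_ideal (\<Union>C)"
proof (rule left_idealI)
  show "0 \<in> \<Union>C" using C(1,2) unfolding left_ideal_def by blast
next
  fix x y assume "x \<in> \<Union>C" "y \<in> \<Union>C"
  then obtain X Y where "X \<in> C" "Y \<in> C" "x \<in> X" "y \<in> Y" by blast
  then obtain Z where "Z \<in> C" "x \<in> Z" "y \<in> Z" using C(3)[of X Y] by blast
  then show "x + y \<in> \<Union>C" using C(2) left_ideal_add by blast
next
  fix x assume "x \<in> \<Union>C"
  then show "- x \<in> \<Union>C" using C(2) unfolding left_ideal_def by blast
next
  fix r x assume "x \<in> \<Union>C"
  then show "r * x \<in> \<Union>C" using C(2) left_ideal_mult by blast
qed

lemma maximal_left_ideal_exists:
  fixes I :: "'a::ring_1 set"
  assumes I: "left_ideal I" "1 \<notin> I"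
  shows "\<exists>M. maximal_left_ideal M \<and> I \<subseteq> M"
proof -
  let ?A = "{J. left_ideal J \<and> 1 \<notin> J \<and> I \<subseteq> J}"
  have "\<exists>M\<in>?A. \<forall>X\<in>?A. M \<subseteq> X \<longrightarrow> X = M"
  proof (rule Zorn_Lemma2, intro ballI)
    fix C assume C: "C \<in> chains ?A"
    show "\<exists>U\<in>?A. \<forall>X\<in>C. X \<subseteq> U"
    proof (cases "C = {}")
      case True
      then show ?thesis using I by auto
    next
      case False
      have members: "\<And>X. X \<in> C \<Longrightarrow> left_ideal X \<and> 1 \<notin> X \<and> I \<subseteq> X"
        using C unfolding chains_def by auto
      have "\<And>X Y. X \<in> C \<Longrightarrow> Y \<in> C \<Longrightarrow> X \<subseteq> Y \<or> Y \<subseteq> X"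
        using C unfolding chains_def chain_subset_def by blast
      then have "left_ideal (\<Union>C)"
        using False members by (intro left_ideal_chain_Union) simp_all
      moreover have "1 \<notin> \<Union>C" using members by blast
      moreover have "I \<subseteq> \<Union>C" using False members by blast
      ultimately have "\<Union>C \<in> ?A" by simp
      then show ?thesis by blast
    qed
  qed
  then obtain M where "M \<in> ?A" and maximal: "\<forall>X\<in>?A. M \<subseteq> X \<longrightarrow> X = M"
    by (elim bexE)
  then have M: "left_ideal M" "1 \<notin> M" "I \<subseteq> M" by simp_all
  have "J = M" if "left_ideal J" "M \<subseteq> J" "J \<noteq> UNIV" for J
  proof -
    have "1 \<notin> J" using that left_ideal_one_UNIV by blast
    then show ?thesis using that M maximal by auto
  qed
  then have "maximal_left_ideal M"
    unfolding maximal_left_ideal_def using M by blast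
  then show ?thesis using M(3) by blast
qed

lemma left_inverse_swap:
  fixes a b v :: "'a::ring_1"
  assumes "v * (1 - b * a) = 1"
  shows "(1 + a * v * b) * (1 - a * b) = 1"
proof -
  have "(1 + a * v * b) * (1 - a * b) = 1 - a * b + a * (v * (1 - b * a)) * b"
    by (simp add: algebra_simps)
  then show ?thesis using assms by simp
qed

lemma jacobson_iff:
  fixes z :: "'a::ring_1"
  shows "z \<in> jacobson \<longleftrightarrow> (\<forall>r. \<exists>v. v * (1 - r * z) = 1)"
proof
  assume z: "z \<in> jacobson"
  show "\<forall>r. \<exists>v. v * (1 - r * z) = 1"
  proof (rule allI, rule ccontr)
    fix r assume no_inv: "\<nexists>v. v * (1 - r * z) = 1"
    \<comment> \<open>the principal left ideal R (1 - r z) is proper, hence inside a maximal left ideal\<close>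
    let ?I = "{m + p * (1 - r * z) | m p. m \<in> {0}}"
    have "left_ideal {0::'a}" by (simp add: left_ideal_def)
    then have "left_ideal ?I" by (rule left_ideal_extend)
    moreover have "1 \<notin> ?I" using no_inv by auto
    ultimately obtain M where M: "maximal_left_ideal M" "?I \<subseteq> M"
      using maximal_left_ideal_exists by blast
    then have lM: "left_ideal M" by (simp add: maximal_left_ideal_def)
    have "z \<in> M" using z M(1) by (simp add: jacobson_def)
    then have "r * z \<in> M" using lM by (simp add: left_ideal_mult)
    moreover have "0 + 1 * (1 - r * z) \<in> ?I" by blast
    then have "1 - r * z \<in> M" using M(2) by auto
    ultimately have "(1 - r * z) + r * z \<in> M" using lM left_ideal_add by blast
    then have "M = UNIV" using left_ideal_one_UNIV[OF lM] by simp
    then show False using M(1) by (simp add: maximal_left_ideal_def)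
  qed
next
  assume inv: "\<forall>r. \<exists>v. v * (1 - r * z) = 1"
  show "z \<in> jacobson" unfolding jacobson_def
  proof (rule InterI, rule ccontr)
    fix M assume "M \<in> {M. maximal_left_ideal M}" and zM: "z \<notin> M"
    then have M: "maximal_left_ideal M" by simp
    then have lM: "left_ideal M" by (simp add: maximal_left_ideal_def)
    \<comment> \<open>by maximality, M + R z is the whole ring, so 1 = m + r z with m \<in> M\<close>
    let ?I = "{m + r * z | m r. m \<in> M}"
    have "m + 0 * z \<in> ?I" if "m \<in> M" for m using that by blast
    then have "M \<subseteq> ?I" by auto
    moreover have "0 \<in> M" using lM by (simp add: left_ideal_def)
    then have "0 + 1 * z \<in> ?I" by blast
    then have "z \<in> ?I" by simp
    ultimately have "?I = UNIV"
      using M left_ideal_extend[OF lM, of z] zM unfolding maximal_left_ideal_def by blast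
    then have "1 \<in> ?I" by simp
    then obtain m r where m: "1 = m + r * z" "m \<in> M" by blast
    obtain v where "v * (1 - r * z) = 1" using inv by blast
    moreover have "m = 1 - r * z" using m(1) by (simp add: eq_diff_eq)
    ultimately have "v * m = 1" by simp
    then have "1 \<in> M" using left_ideal_mult[OF lM m(2), of v] by simp
    then have "M = UNIV" by (rule left_ideal_one_UNIV[OF lM])
    then show False using M by (simp add: maximal_left_ideal_def)
  qed
qed

lemma jacobson_left_invertible:
  fixes z :: "'a::ring_1"
  assumes "z \<in> jacobson"
  shows "\<exists>v. v * (1 - z) = 1"
proof -
  have "\<forall>r. \<exists>v. v * (1 - r * z) = 1" using assms by (simp add: jacobson_iff)
  then show ?thesis by (metis mult_1)
qed

lemma jacobson_mult_right:
  fixes z w :: "'a::ring_1"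
  assumes "z \<in> jacobson"
  shows "z * w \<in> jacobson"
proof -
  have inv: "\<forall>q. \<exists>v. v * (1 - q * z) = 1" using assms by (simp add: jacobson_iff)
  have "\<exists>v. v * (1 - r * (z * w)) = 1" for r
  proof -
    obtain v where "v * (1 - (w * r) * z) = 1" using inv by blast
    then have "v * (1 - w * (r * z)) = 1" by (simp add: mult.assoc)
    then have "(1 + r * z * v * w) * (1 - r * z * w) = 1" by (rule left_inverse_swap)
    moreover have "r * z * w = r * (z * w)" by (rule mult.assoc)
    ultimately show ?thesis by auto
  qed
  then show ?thesis by (simp add: jacobson_iff)
qed

lemma full_of_two_terms:
  fixes u :: "'a::ring_1"
  assumes "p * u * r + q * u * s = 1"
  shows "full u"
  unfolding full_def
proof (intro exI)
  show "(\<Sum>i<(2::nat). (\<lambda>i. if i = 0 then p else q) i * u * (\<lambda>i. if i = 0 then r else s) i) = 1"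
    using assms by (simp add: eval_nat_numeral)
qed

lemma decomposition_identity:
  fixes a e r s x y :: "'a::ring_1"
  assumes hx: "1 + a * r = e * x" and hy: "1 + (1 - a) * s = (1 - e) * y"
  shows "- ((1 - e) * (a - e) * r) + e * (a - e) * s = 1 - (e - e * e) * (x - r - s + y)"
proof -
  have ar: "a * r = e * x - 1" using hx by (simp add: eq_diff_eq add.commute)
  have as: "a * s = s + 1 - (1 - e) * y" using hy by (simp add: algebra_simps eq_diff_eq)
  have left: "(1 - e) * (a - e) * r = (1 - e) * (a * r) - (1 - e) * e * r"
    and right: "e * (a - e) * s = e * (a * s) - e * e * s"
    by (simp_all add: algebra_simps)
  show ?thesis unfolding left right ar as by (simp add: algebra_simps)
qed

theorem corollary2p7:
  assumes "\<forall>a b :: 'a::ring_1. a + b = 1 \<longrightarrow>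
     (\<exists>r s e. (\<exists>x. 1 + a * r = e * x) \<and> (\<exists>y. 1 + b * s = (1 - e) * y)
        \<and> (\<forall>t. e * t * (1 - e) \<in> jacobson))"
  shows "feckly_clean TYPE('a)"
  unfolding feckly_clean_def
proof
  fix a :: 'a
  obtain r s e x y where hx: "1 + a * r = e * x" and hy: "1 + (1 - a) * s = (1 - e) * y"
    and J: "\<forall>t. e * t * (1 - e) \<in> jacobson"
    using assms[rule_format, of a "1 - a"] by auto
  let ?z = "(e - e * e) * (x - r - s + y)"
  have "e - e * e \<in> jacobson" using J[rule_format, of 1] by (simp add: algebra_simps)
  then obtain v where v: "v * (1 - ?z) = 1"
    using jacobson_mult_right jacobson_left_invertible by blast
  have "(- (v * (1 - e))) * (a - e) * r + (v * e) * (a - e) * s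
      = v * (- ((1 - e) * (a - e) * r) + e * (a - e) * s)"
    by (simp add: algebra_simps)
  also have "\<dots> = 1" using decomposition_identity[OF hx hy] v by simp
  finally have "full (a - e)" by (rule full_of_two_terms)
  then show "feckly_clean_elem a"
    unfolding feckly_clean_elem_def using J by (intro exI[of _ e] exI[of _ "a - e"]) auto
qed

end
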